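(* Let $k_1<k_2<\cdots<k_n$ be positive integers and let $s_1$ be any positive integer. Then there exist a $\delta$-set $\Sigma=\{s_1<s_2<\cdots<s_l\}$ (whose minimum is the prescribed $s_1$) and indices $1\le j_1<j_2<\cdots<j_n<l-1$ such that $s_{j_i+1}-s_{j_i}=k_i$ for every $i=1,\ldots,n$.
   Context: All graphs are finite and simple; $d(u,v)$ denotes the usual graph distance. For a set $J$ of nonnegative integers, a distance $J$-labeling of $G$ is a function $f:V(G)\to J$ with $f(V(G))=J$ such that whenever two distinct vertices $u,v$ satisfy $f(u)=f(v)=k$, we have $d(u,v)=k$. It is proper if every $k\in J\setminus\{0\}$ is the label of at least two vertices. A finite set $\Sigma$ of nonnegative integers is a $\delta$-set if there exists a graph admitting a proper distance $\Sigma$-labeling. *)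

theory Defs
  imports Main "HOL-Library.Extended_Nat"
begin

definition simple_graph :: "'a set \<Rightarrow> ('a \<Rightarrow> 'a \<Rightarrow> bool) \<Rightarrow> bool" where
  "simple_graph V E \<longleftrightarrow> finite V \<and> (\<forall>u v. E u v \<longrightarrow> u \<in> V \<and> v \<in> V)
     \<and> (\<forall>u v. E u v \<longrightarrow> E v u) \<and> (\<forall>u. \<not> E u u)"

fun walk_len :: "('a \<Rightarrow> 'a \<Rightarrow> bool) \<Rightarrow> nat \<Rightarrow> 'a \<Rightarrow> 'a \<Rightarrow> bool" where
  "walk_len E 0 u v \<longleftrightarrow> u = v"
| "walk_len E (Suc n) u v \<longleftrightarrow> (\<exists>w. E u w \<and> walk_len E n w v)"

definition gdist :: "('a \<Rightarrow> 'a \<Rightarrow> bool) \<Rightarrow> 'a \<Rightarrow> 'a \<Rightarrow> enat" where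
  "gdist E u v = (if \<exists>n. walk_len E n u v then enat (LEAST n. walk_len E n u v) else \<infinity>)"

definition distance_labeling ::
  "'a set \<Rightarrow> ('a \<Rightarrow> 'a \<Rightarrow> bool) \<Rightarrow> nat set \<Rightarrow> ('a \<Rightarrow> nat) \<Rightarrow> bool" where
  "distance_labeling V E J f \<longleftrightarrow> f ` V = J \<and>
     (\<forall>u\<in>V. \<forall>v\<in>V. u \<noteq> v \<and> f u = f v \<longrightarrow> gdist E u v = enat (f u))"

definition proper_distance_labeling ::
  "'a set \<Rightarrow> ('a \<Rightarrow> 'a \<Rightarrow> bool) \<Rightarrow> nat set \<Rightarrow> ('a \<Rightarrow> nat) \<Rightarrow> bool" where
  "proper_distance_labeling V E J f \<longleftrightarrow> distance_labeling V E J f \<and>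
     (\<forall>k \<in> J - {0}. \<exists>u\<in>V. \<exists>v\<in>V. u \<noteq> v \<and> f u = k \<and> f v = k)"

text \<open>Graphs are taken on vertex sets of naturals (every finite graph has an isomorphic copy).\<close>
definition delta_set :: "nat set \<Rightarrow> bool" where
  "delta_set \<Sigma> \<longleftrightarrow> finite \<Sigma> \<and>
     (\<exists>(V::nat set) E f. simple_graph V E \<and> proper_distance_labeling V E \<Sigma> f)"

end

theory Submission
  imports Defs
begin

text \<open>For \<open>d \<ge> 1\<close> the interval \<open>[d, 3d - 2]\<close> is a \<open>\<delta>\<close>-set, realised by a path on \<open>4d - 2\<close>
vertices: a label \<open>x \<le> 2d - 2\<close> sits at positions \<open>x\<close> and \<open>2x\<close>, a label \<open>x \<ge> 2d - 1\<close> at positions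
\<open>x - (2d - 1)\<close> and \<open>2x - (2d - 1)\<close>. Disjoint unions of such paths realise unions of such intervals,
provided the intervals are pairwise disjoint. Starting with \<open>d\<^sub>0 = s\<^sub>1\<close> and putting
\<open>d\<^sub>i = (3d\<^sub>i\<^sub>-\<^sub>1 - 2) + k\<^sub>i\<close>, the gap between the interval of \<open>d\<^sub>i\<^sub>-\<^sub>1\<close> and the interval of \<open>d\<^sub>i\<close>
is exactly \<open>k\<^sub>i\<close>, and it is followed by a further element \<open>3d\<^sub>i - 2 > d\<^sub>i\<close>.\<close>

definition path_edge :: "nat set \<Rightarrow> nat \<Rightarrow> nat \<Rightarrow> bool" where
  "path_edge V u v \<longleftrightarrow> u \<in> V \<and> v \<in> V \<and> (u = Suc v \<or> v = Suc u)"

lemma walk_len_path_edge_imp_dist_le: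
  "walk_len (path_edge V) n u v \<Longrightarrow> nat \<bar>int u - int v\<bar> \<le> n"
proof (induction n arbitrary: u)
  case (Suc n)
  then obtain w where "path_edge V u w" "walk_len (path_edge V) n w v" by auto
  with Suc.IH[of w] show ?case unfolding path_edge_def by auto
qed simp

lemma walk_len_path_edge_up:
  "{u..u + m} \<subseteq> V \<Longrightarrow> walk_len (path_edge V) m u (u + m)"
proof (induction m arbitrary: u)
  case (Suc m)
  have "{Suc u..Suc u + m} \<subseteq> V" using Suc.prems by auto
  then have "walk_len (path_edge V) m (Suc u) (Suc u + m)" by (rule Suc.IH)
  moreover have "path_edge V u (Suc u)" using Suc.prems unfolding path_edge_def by auto
  ultimately show ?case by auto
qed simp

lemma walk_len_path_edge_down:
  "{u..u + m} \<subseteq> V \<Longrightarrow> walk_len (path_edge V) m (u + m) u"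
proof (induction m)
  case (Suc m)
  have "{u..u + m} \<subseteq> V" using Suc.prems by auto
  then have "walk_len (path_edge V) m (u + m) u" by (rule Suc.IH)
  moreover have "path_edge V (u + Suc m) (u + m)" using Suc.prems unfolding path_edge_def by auto
  ultimately show ?case by auto
qed simp

lemma gdist_path_edge:
  assumes "{min u v..max u v} \<subseteq> V"
  shows "gdist (path_edge V) u v = enat (nat \<bar>int u - int v\<bar>)"
proof -
  have walk: "walk_len (path_edge V) (nat \<bar>int u - int v\<bar>) u v"
  proof (cases "u \<le> v")
    case True
    then show ?thesis
      using walk_len_path_edge_up[of u "v - u" V] assms by (simp add: nat_diff_distrib)
  next
    case False
    then have "nat \<bar>int u - int v\<bar> = u - v" by simp
    then show ?thesis
      using walk_len_path_edge_down[of v "u - v" V] assms False by (simp add: max_def min_def)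
  qed
  have "(LEAST n. walk_len (path_edge V) n u v) = nat \<bar>int u - int v\<bar>"
    by (rule Least_equality) (use walk walk_len_path_edge_imp_dist_le in auto)
  then show ?thesis using walk unfolding gdist_def by auto
qed

definition path_label :: "nat \<Rightarrow> nat \<Rightarrow> nat" where
  "path_label d p = (if p < d then p + 2*d - 1 else if p < 2*d - 1 then p
     else if even p then p div 2 else (p + 2*d - 1) div 2)"

lemma path_label_range:
  "0 < d \<Longrightarrow> p < 4*d - 2 \<Longrightarrow> path_label d p \<in> {d..3*d - 2}"
  unfolding path_label_def by (auto elim!: evenE oddE)

lemma path_label_eq_imp_dist:
  "0 < d \<Longrightarrow> q < 4*d - 2 \<Longrightarrow> p < q \<Longrightarrow> path_label d p = path_label d q
    \<Longrightarrow> q - p = path_label d p"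
  unfolding path_label_def by (auto elim!: evenE oddE split: if_splits)

lemma path_label_attained_twice:
  assumes "0 < d" "x \<in> {d..3*d - 2}"
  obtains p q where "p < q" "q < 4*d - 2" "path_label d p = x" "path_label d q = x"
proof (cases "x \<le> 2*d - 2")
  case True
  show ?thesis
    by (rule that[of x "2*x"]) (use assms True in \<open>auto simp: path_label_def\<close>)
next
  case False
  show ?thesis
    by (rule that[of "x - (2*d - 1)" "2*x - (2*d - 1)"])
       (use assms False in \<open>auto simp: path_label_def\<close>)
qed

text \<open>Block \<open>b\<close> is a path on the vertices \<open>block_offset d b + p\<close>, \<open>p < 4 d\<^sub>b - 2\<close>; the vertex
\<open>block_offset d b + 4 d\<^sub>b - 2\<close> is left out, so no edge joins consecutive blocks.\<close>

fun block_offset :: "(nat \<Rightarrow> nat) \<Rightarrow> nat \<Rightarrow> nat" where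
  "block_offset d 0 = 0"
| "block_offset d (Suc b) = block_offset d b + (4 * d b - 1)"

definition block_vertices :: "(nat \<Rightarrow> nat) \<Rightarrow> nat \<Rightarrow> nat set" where
  "block_vertices d n = (\<Union>b\<le>n. {block_offset d b..<block_offset d b + (4 * d b - 2)})"

definition block_of :: "(nat \<Rightarrow> nat) \<Rightarrow> nat \<Rightarrow> nat" where
  "block_of d x = (LEAST b. x < block_offset d (Suc b))"

definition block_label :: "(nat \<Rightarrow> nat) \<Rightarrow> nat \<Rightarrow> nat" where
  "block_label d x = path_label (d (block_of d x)) (x - block_offset d (block_of d x))"

definition interval_union :: "(nat \<Rightarrow> nat) \<Rightarrow> nat \<Rightarrow> nat set" where
  "interval_union d n = (\<Union>b\<le>n. {d b..3 * d b - 2})"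

definition separated_starts :: "(nat \<Rightarrow> nat) \<Rightarrow> nat \<Rightarrow> bool" where
  "separated_starts d n \<longleftrightarrow> 0 < d 0 \<and> (\<forall>b<n. 3 * d b - 2 < d (Suc b))"

lemma block_offset_mono: "b \<le> b' \<Longrightarrow> block_offset d b \<le> block_offset d b'"
  by (rule lift_Suc_mono_le[of "block_offset d"]) auto

lemma block_of_offset:
  assumes "p < 4 * d b - 2"
  shows "block_of d (block_offset d b + p) = b"
  unfolding block_of_def
proof (rule Least_equality)
  show "block_offset d b + p < block_offset d (Suc b)" using assms by simp
next
  fix c assume "block_offset d b + p < block_offset d (Suc c)"
  then show "b \<le> c" using block_offset_mono[of "Suc c" b d] by (cases "b \<le> c") auto
qed

lemma block_label_offset:
  "p < 4 * d b - 2 \<Longrightarrow> block_label d (block_offset d b + p) = path_label (d b) p"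
  unfolding block_label_def by (simp add: block_of_offset)

lemma block_vertices_cases:
  assumes "x \<in> block_vertices d n"
  obtains b p where "b \<le> n" "p < 4 * d b - 2" "x = block_offset d b + p"
proof -
  obtain b where "b \<le> n" "x \<in> {block_offset d b..<block_offset d b + (4 * d b - 2)}"
    using assms unfolding block_vertices_def by auto
  then show ?thesis by (intro that[of b "x - block_offset d b"]) auto
qed

lemma block_vertices_offset:
  "b \<le> n \<Longrightarrow> p < 4 * d b - 2 \<Longrightarrow> block_offset d b + p \<in> block_vertices d n"
  unfolding block_vertices_def by force

lemma separated_starts_pos:
  assumes "separated_starts d n" "b \<le> n"
  shows "0 < d b"
proof (cases b)
  case (Suc c)
  then have "3 * d c - 2 < d b" using assms unfolding separated_starts_def by auto
  then show ?thesis by simp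
qed (use assms in \<open>simp add: separated_starts_def\<close>)

lemma separated_starts_gap:
  assumes sep: "separated_starts d n" and "b < b'" "b' \<le> n"
  shows "3 * d b - 2 < d b'"
  using assms(2,3)
proof (induction b' rule: less_induct)
  case (less b')
  then obtain c where c: "b' = Suc c" "b \<le> c" by (cases b') auto
  have "3 * d c - 2 < d b'" using sep less.prems c unfolding separated_starts_def by auto
  moreover have "3 * d b - 2 \<le> 3 * d c - 2"
    using less.IH[of c] less.prems c separated_starts_pos[OF sep, of c]
    by (cases "b = c") auto
  ultimately show ?case by simp
qed

lemma separated_starts_upper_less:
  assumes sep: "separated_starts d n" and "b < b'" "b' \<le> n"
  shows "3 * d b - 2 < 3 * d b' - 2"
  using separated_starts_gap[OF assms] separated_starts_pos[OF sep assms(3)] by linarith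

lemma separated_starts_lower_less_upper:
  assumes sep: "separated_starts d n" and "0 < b" "b \<le> n"
  shows "d b < 3 * d b - 2"
proof -
  have "3 * d (b - 1) - 2 < d b" using separated_starts_gap[OF sep _ assms(3), of "b - 1"] assms(2) by simp
  moreover have "0 < d (b - 1)" using separated_starts_pos[OF sep, of "b - 1"] assms(3) by simp
  ultimately show ?thesis by linarith
qed

lemma separated_starts_endpoints:
  "separated_starts d n \<Longrightarrow> b \<le> n \<Longrightarrow> d b \<in> interval_union d n \<and> 3 * d b - 2 \<in> interval_union d n"
  using separated_starts_pos[of d n b] unfolding interval_union_def by (intro conjI UN_I[of b]) auto

lemma block_label_in_interval_union:
  assumes "separated_starts d n" "x \<in> block_vertices d n"
  shows "block_label d x \<in> interval_union d n"
proof -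
  obtain b p where "b \<le> n" "p < 4 * d b - 2" "x = block_offset d b + p"
    using block_vertices_cases[OF assms(2)] .
  then show ?thesis
    using path_label_range[OF separated_starts_pos[OF assms(1)]] block_label_offset
    unfolding interval_union_def by fastforce
qed

lemma block_label_attained_twice:
  assumes sep: "separated_starts d n" and "x \<in> interval_union d n"
  obtains u v where "u \<in> block_vertices d n" "v \<in> block_vertices d n" "u \<noteq> v"
    "block_label d u = x" "block_label d v = x"
proof -
  obtain b where b: "b \<le> n" "x \<in> {d b..3 * d b - 2}"
    using assms(2) unfolding interval_union_def by auto
  obtain p q where "p < q" "q < 4 * d b - 2" "path_label (d b) p = x" "path_label (d b) q = x"
    using path_label_attained_twice[OF separated_starts_pos[OF sep b(1)] b(2)] .
  then show ?thesis
    by (intro that[of "block_offset d b + p" "block_offset d b + q"])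
       (auto simp: b(1) block_vertices_offset block_label_offset)
qed

text \<open>Equal labels force equal blocks because the label intervals are disjoint; within a block
the graph is a path, so the distance is the difference of positions.\<close>

lemma block_label_eq_imp_gdist:
  assumes sep: "separated_starts d n"
    and u: "u \<in> block_vertices d n" and v: "v \<in> block_vertices d n"
    and "u \<noteq> v" and same: "block_label d u = block_label d v"
  shows "gdist (path_edge (block_vertices d n)) u v = enat (block_label d u)"
proof -
  obtain b p where bp: "b \<le> n" "p < 4 * d b - 2" "u = block_offset d b + p"
    using block_vertices_cases[OF u] .
  obtain b' q where bq: "b' \<le> n" "q < 4 * d b' - 2" "v = block_offset d b' + q"
    using block_vertices_cases[OF v] .
  have lu: "block_label d u \<in> {d b..3 * d b - 2}" and lv: "block_label d v \<in> {d b'..3 * d b' - 2}"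
    using bp bq path_label_range[OF separated_starts_pos[OF sep]] block_label_offset by auto
  have "b = b'"
  proof (rule ccontr)
    assume "b \<noteq> b'"
    then consider "b < b'" | "b' < b" by linarith
    then show False
      by cases (use separated_starts_gap[OF sep _ bq(1), of b]
          separated_starts_gap[OF sep _ bp(1), of b'] lu lv same in auto)
  qed
  then have labels: "block_label d u = path_label (d b) p" "block_label d v = path_label (d b) q"
    using bp bq block_label_offset by auto
  have "nat \<bar>int p - int q\<bar> = block_label d u"
  proof (cases "p < q")
    case True
    then show ?thesis
      using path_label_eq_imp_dist[OF separated_starts_pos[OF sep bp(1)] _ True] bq \<open>b = b'\<close>
        labels same by auto
  next
    case False
    then have "q < p" using bp bq \<open>b = b'\<close> \<open>u \<noteq> v\<close> by auto
    then have "p - q = path_label (d b) q"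
      using path_label_eq_imp_dist[OF separated_starts_pos[OF sep bp(1)] bp(2)] labels same
      by auto
    then show ?thesis using \<open>q < p\<close> labels same by simp
  qed
  moreover have "nat \<bar>int u - int v\<bar> = nat \<bar>int p - int q\<bar>" using bp bq \<open>b = b'\<close> by simp
  moreover have "{min u v..max u v} \<subseteq> block_vertices d n"
  proof
    fix x assume "x \<in> {min u v..max u v}"
    then have "x \<in> {block_offset d b..<block_offset d b + (4 * d b - 2)}"
      using bp bq \<open>b = b'\<close> by auto
    then show "x \<in> block_vertices d n" using bp(1) unfolding block_vertices_def by auto
  qed
  ultimately show ?thesis using gdist_path_edge[of u v] by simp
qed

lemma delta_set_interval_union:
  assumes sep: "separated_starts d n"
  shows "delta_set (interval_union d n)"
proof -
  let ?V = "block_vertices d n" and ?f = "block_label d"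
  have "simple_graph ?V (path_edge ?V)"
    unfolding simple_graph_def path_edge_def block_vertices_def by auto
  moreover have "?f ` ?V = interval_union d n"
    using block_label_in_interval_union[OF sep] block_label_attained_twice[OF sep] by blast
  moreover have "finite (interval_union d n)" unfolding interval_union_def by auto
  moreover have "\<exists>u\<in>?V. \<exists>v\<in>?V. u \<noteq> v \<and> ?f u = x \<and> ?f v = x" if "x \<in> interval_union d n" for x
    using block_label_attained_twice[OF sep that] by metis
  ultimately show ?thesis
    unfolding delta_set_def proper_distance_labeling_def distance_labeling_def
    using block_label_eq_imp_gdist[OF sep] by blast
qed

lemma interval_union_ge_start:
  assumes sep: "separated_starts d n" and "x \<in> interval_union d n"
  shows "d 0 \<le> x"
proof -
  obtain b where b: "b \<le> n" "d b \<le> x" using assms(2) unfolding interval_union_def by auto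
  have "d 0 \<le> 3 * d 0 - 2" using separated_starts_pos[OF sep] by simp
  then have "d 0 \<le> d b" using separated_starts_gap[OF sep _ b(1), of 0] by (cases b) auto
  with b show ?thesis by simp
qed

lemma interval_union_gap_empty:
  assumes sep: "separated_starts d n" and "b < n" and "x \<in> interval_union d n"
  shows "\<not> (3 * d b - 2 < x \<and> x < d (Suc b))"
proof
  assume between: "3 * d b - 2 < x \<and> x < d (Suc b)"
  obtain c where c: "c \<le> n" "x \<in> {d c..3 * d c - 2}"
    using assms(3) unfolding interval_union_def by auto
  consider "c < Suc b" | "Suc b \<le> c" by linarith
  then show False
  proof cases
    case 1
    then have "3 * d c - 2 \<le> 3 * d b - 2"
      using separated_starts_gap[OF sep _ , of c b] \<open>b < n\<close> separated_starts_pos[OF sep, of c]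
      by (cases "c = b") auto
    then show False using c between by simp
  next
    case 2
    then have "d (Suc b) \<le> d c"
      using separated_starts_gap[OF sep _ c(1), of "Suc b"] separated_starts_pos[OF sep, of "Suc b"]
        \<open>b < n\<close> by (cases "c = Suc b") auto
    then show False using c between by simp
  qed
qed

lemma finite_set_enumeration:
  fixes A :: "nat set"
  assumes "finite A"
  obtains s where "strict_mono_on {1..card A} s" "s ` {1..card A} = A"
proof
  let ?xs = "sorted_list_of_set A"
  let ?s = "\<lambda>i. ?xs ! (i - 1)"
  show "strict_mono_on {1..card A} ?s"
    by (rule strict_mono_onI) (auto intro: sorted_wrt_nth_less)
  have "{1..card A} = Suc ` {..<length ?xs}" by (simp add: image_Suc_lessThan)
  then have "?s ` {1..card A} = set ?xs" by (auto simp: image_image in_set_conv_nth)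
  then show "?s ` {1..card A} = A" using assms by simp
qed

lemma enumeration_index:
  fixes s :: "nat \<Rightarrow> 'a::linorder"
  assumes "strict_mono_on {1..l} s" "s ` {1..l} = A" "x \<in> A"
  shows "the_inv_into {1..l} s x \<in> {1..l}" "s (the_inv_into {1..l} s x) = x"
proof -
  have inj: "inj_on s {1..l}" using strict_mono_on_imp_inj_on[OF assms(1)] .
  have "x \<in> s ` {1..l}" using assms(2,3) by simp
  then show "the_inv_into {1..l} s x \<in> {1..l}" "s (the_inv_into {1..l} s x) = x"
    using the_inv_into_into[OF inj _ order_refl] f_the_inv_into_f[OF inj] by auto
qed

lemma enumeration_index_less:
  fixes s :: "nat \<Rightarrow> 'a::linorder"
  assumes "strict_mono_on {1..l} s" "s ` {1..l} = A" "x \<in> A" "y \<in> A" "x < y"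
  shows "the_inv_into {1..l} s x < the_inv_into {1..l} s y"
  using enumeration_index[OF assms(1,2)] assms(3-5) strict_mono_on_less[OF assms(1)] by metis

lemma enumeration_index_succ:
  fixes s :: "nat \<Rightarrow> 'a::linorder"
  assumes mono: "strict_mono_on {1..l} s" and im: "s ` {1..l} = A"
    and "x \<in> A" "y \<in> A" "x < y" and gap: "\<forall>z\<in>A. \<not> (x < z \<and> z < y)"
  shows "the_inv_into {1..l} s y = the_inv_into {1..l} s x + 1"
proof -
  let ?i = "the_inv_into {1..l} s x" and ?j = "the_inv_into {1..l} s y"
  have i: "?i \<in> {1..l}" "s ?i = x" and j: "?j \<in> {1..l}" "s ?j = y"
    using enumeration_index[OF mono im] assms(3,4) by auto
  have "?i < ?j" using enumeration_index_less[OF mono im] assms(3-5) .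
  then have succ: "?i + 1 \<in> {1..l}" using i j by auto
  show ?thesis
  proof (rule ccontr)
    assume "?j \<noteq> ?i + 1"
    with \<open>?i < ?j\<close> have "?i < ?i + 1" "?i + 1 < ?j" by auto
    then have "x < s (?i + 1)" "s (?i + 1) < y"
      using strict_mono_onD[OF mono] i j succ by metis+
    moreover have "s (?i + 1) \<in> A" using im succ by auto
    ultimately show False using gap by blast
  qed
qed

lemma enumeration_first:
  fixes s :: "nat \<Rightarrow> 'a::linorder"
  assumes "strict_mono_on {1..l} s" "s ` {1..l} = A" "x \<in> A" "\<forall>y\<in>A. x \<le> y"
  shows "s 1 = x"
proof -
  obtain t where t: "t \<in> {1..l}" "s t = x" using assms(2,3) by auto
  then have "s 1 \<le> x" using strict_mono_on_leD[OF assms(1), of 1 t] by auto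
  moreover have "s 1 \<in> A" using assms(2) t by auto
  ultimately show ?thesis using assms(4) by (simp add: antisym)
qed

lemma interval_union_enumeration_first:
  fixes s :: "nat \<Rightarrow> nat"
  assumes sep: "separated_starts d n"
    and mono: "strict_mono_on {1..l} s" and im: "s ` {1..l} = interval_union d n"
  shows "s 1 = d 0"
  using enumeration_first[OF mono im] separated_starts_endpoints[OF sep]
    interval_union_ge_start[OF sep] by blast

lemma interval_union_enumeration_gap:
  fixes s :: "nat \<Rightarrow> nat"
  assumes sep: "separated_starts d n"
    and mono: "strict_mono_on {1..l} s" and im: "s ` {1..l} = interval_union d n"
    and "b < n"
  defines "t \<equiv> the_inv_into {1..l} s (3 * d b - 2)"
  shows "1 \<le> t" "t + 1 < l" "s t = 3 * d b - 2" "s (t + 1) = d (Suc b)"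
proof -
  let ?idx = "the_inv_into {1..l} s"
  have ends: "d c \<in> interval_union d n" "3 * d c - 2 \<in> interval_union d n" if "c \<le> n" for c
    using separated_starts_endpoints[OF sep that] by auto
  show "1 \<le> t" "s t = 3 * d b - 2"
    unfolding t_def using enumeration_index[OF mono im ends(2)[of b]] \<open>b < n\<close> by auto
  have succ: "?idx (d (Suc b)) = t + 1"
    unfolding t_def
    by (rule enumeration_index_succ[OF mono im])
       (use ends[of b] ends[of "Suc b"] \<open>b < n\<close> sep interval_union_gap_empty[OF sep]
         in \<open>auto simp: separated_starts_def\<close>)
  then show "s (t + 1) = d (Suc b)"
    using enumeration_index(2)[OF mono im ends(1)[of "Suc b"]] \<open>b < n\<close> by simp
  have "?idx (d (Suc b)) < ?idx (3 * d (Suc b) - 2)"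
    using enumeration_index_less[OF mono im] ends[of "Suc b"] \<open>b < n\<close>
      separated_starts_lower_less_upper[OF sep, of "Suc b"] by auto
  moreover have "?idx (3 * d (Suc b) - 2) \<le> l"
    using enumeration_index(1)[OF mono im ends(2)[of "Suc b"]] \<open>b < n\<close> by simp
  ultimately show "t + 1 < l" using succ by simp
qed

fun interval_start :: "(nat \<Rightarrow> nat) \<Rightarrow> nat \<Rightarrow> nat \<Rightarrow> nat" where
  "interval_start k s1 0 = s1"
| "interval_start k s1 (Suc b) = 3 * interval_start k s1 b - 2 + k (Suc b)"

lemma separated_starts_interval_start:
  "0 < s1 \<Longrightarrow> \<forall>i\<in>{1..n}. 0 < k i \<Longrightarrow> separated_starts (interval_start k s1) n"
  unfolding separated_starts_def by auto

theorem mainTheorem9: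
  fixes k :: "nat \<Rightarrow> nat" and n :: nat and s1 :: nat
  assumes kpos: "\<forall>i\<in>{1..n}. 0 < k i"
    and kinc: "strict_mono_on {1..n} k"
    and s1pos: "0 < s1"
  shows "\<exists>\<Sigma> (s :: nat \<Rightarrow> nat) (l :: nat) (j :: nat \<Rightarrow> nat).
           delta_set \<Sigma> \<and> strict_mono_on {1..l} s \<and> \<Sigma> = s ` {1..l} \<and> s 1 = s1 \<and>
           strict_mono_on {1..n} j \<and> (\<forall>i\<in>{1..n}. 1 \<le> j i \<and> j i < l - 1) \<and>
           (\<forall>i\<in>{1..n}. s (j i + 1) - s (j i) = k i)"
proof -
  define d where "d = interval_start k s1"
  define U where "U = interval_union d n"
  define l where "l = card U"
  have sep: "separated_starts d n"
    unfolding d_def using separated_starts_interval_start[OF s1pos kpos] .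
  obtain s where mono: "strict_mono_on {1..l} s" and im: "s ` {1..l} = U"
    using finite_set_enumeration[of U] unfolding l_def U_def interval_union_def by auto
  define j where "j i = the_inv_into {1..l} s (3 * d (i - 1) - 2)" for i
  note gap = interval_union_enumeration_gap[OF sep mono im[unfolded U_def]]
  have "s 1 = s1"
    using interval_union_enumeration_first[OF sep mono] im by (simp add: U_def d_def)
  moreover have "strict_mono_on {1..n} j"
    by (rule strict_mono_onI, unfold j_def, rule enumeration_index_less[OF mono im])
       (use separated_starts_endpoints[OF sep] separated_starts_upper_less[OF sep]
         in \<open>auto simp: U_def\<close>)
  moreover have "1 \<le> j i \<and> j i < l - 1 \<and> s (j i + 1) - s (j i) = k i" if "i \<in> {1..n}" for i
    using gap[of "i - 1"] that unfolding j_def by (cases i) (auto simp: d_def)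
  ultimately show ?thesis
    using delta_set_interval_union[OF sep] mono im unfolding U_def by blast
qed

end
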